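(* Define $X:\Delta^{\mathrm{re}}\to\mathrm{End}(\mathfrak h^* )$ by $$X(\alpha):=-\alpha\,(\alpha|\cdot)+\tfrac12\,\mathrm{id}_{\mathfrak h^*},\qquad\text{i.e. } X(\alpha)(x)=-(\alpha|x)\alpha+\tfrac12x.$$ Then for all real roots $\alpha,\beta$: $X(\alpha)X(\beta)-X(\beta)X(\alpha)=0$ if $(\alpha|\beta)=0$, and $X(\alpha)X(\beta)+X(\beta)X(\alpha)=X(\alpha\pm\beta)$ if $(\alpha|\beta)=\mp1$. Consequently the assignment $X_i\mapsto X(\alpha_i)\otimes\Gamma(\alpha_i)\in\mathrm{End}(\mathfrak h^*\otimes S)$ extends to a representation $\sigma$ of $\mathfrak k$.
   Context: Let $A=(a_{ij})_{1\le i,j\le n}$ be a symmetrizable simply laced generalized Cartan matrix (off-diagonal entries $0$ or $-1$); the Dynkin diagram has an edge between $i\ne j$ iff $a_{ij}=-1$. Let $\mathfrak g$ be the split real Kac–Moody algebra of $A$ with Chevalley generators $e_i,f_i$, Cartan subalgebra $\mathfrak h$ (from a real realization), simple roots $\alpha_1,\dots,\alpha_n\in\mathfrak h^*$, set of real roots $\Delta^{\mathrm{re}}$, and let $(\cdot|\cdot)$ be the nondegenerate invariant symmetric bilinear form induced on $\mathfrak h^*$, with $(\alpha_i|\alpha_j)=a_{ij}$ (so $(\alpha|\alpha)=2$ for real roots). Let $\mathfrak k$ be the fixed-point subalgebra of the Chevalley involution ($e_i\mapsto -f_i$, $f_i\mapsto-e_i$, $h\mapsto -h$), with Berman generators $X_i=e_i-f_i$;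 $\mathfrak k$ is presented by generators $X_1,\dots,X_n$ and relations $[X_i,[X_i,X_j]]=-X_j$ if $a_{ij}=-1$, $[X_i,X_j]=0$ if $a_{ij}=0$. A generalized spin representation is a representation $\rho$ of $\mathfrak k$ with $\rho(X_i)^2=-\frac14\mathrm{id}$. Fix a finite-dimensional real vector space $S$ with positive definite inner product and orthonormal basis, and a generalized spin representation $\rho:\mathfrak k\to\mathrm{End}(S)$ whose values $\rho(X_i)$ are anti-symmetric real matrices in this basis (such exist, e.g. by realifying the generalized spin representations with compact image of Hainke–Köhl–Levy); put $\Gamma(\alpha_i):=2\rho(X_i)$. *)

theory Defs
  imports "HOL-Analysis.Analysis"
begin

definition simply_laced_gcm :: "('i \<Rightarrow> 'i \<Rightarrow> real) \<Rightarrow> bool" where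
  "simply_laced_gcm A \<longleftrightarrow>
     (\<forall>i. A i i = 2) \<and>
     (\<forall>i j. i \<noteq> j \<longrightarrow> A i j = 0 \<or> A i j = -1) \<and>
     (\<forall>i j. A i j = 0 \<longleftrightarrow> A j i = 0)"

definition realization_form ::
  "('i::finite \<Rightarrow> 'i \<Rightarrow> real) \<Rightarrow> ('i \<Rightarrow> real^'h::finite) \<Rightarrow> (real^'h \<Rightarrow> real^'h \<Rightarrow> real) \<Rightarrow> bool" where
  "realization_form A \<alpha> B \<longleftrightarrow>
     inj \<alpha> \<and> independent (range \<alpha>) \<and>
     CARD('h) = 2 * CARD('i) - rank (\<chi> i j. A i j) \<and>
     bilinear B \<and> (\<forall>x y. B x y = B y x) \<and>
     (\<forall>x. (\<forall>y. B x y = 0) \<longrightarrow> x = 0) \<and>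
     (\<forall>i j. B (\<alpha> i) (\<alpha> j) = A i j)"

text \<open>Real roots: the orbit of the simple roots under the Weyl group, which is
  generated by the simple reflections s_i(x) = x - (alpha_i|x) alpha_i.\<close>
inductive_set real_roots ::
  "('i \<Rightarrow> real^'h::finite) \<Rightarrow> (real^'h \<Rightarrow> real^'h \<Rightarrow> real) \<Rightarrow> (real^'h) set"
  for \<alpha> B where
  simple: "\<alpha> i \<in> real_roots \<alpha> B"
| reflect: "\<beta> \<in> real_roots \<alpha> B \<Longrightarrow> \<beta> - B (\<alpha> i) \<beta> *\<^sub>R \<alpha> i \<in> real_roots \<alpha> B"

definition Xop :: "(real^'h::finite \<Rightarrow> real^'h \<Rightarrow> real) \<Rightarrow> real^'h \<Rightarrow> real^'h \<Rightarrow> real^'h" where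
  "Xop B \<alpha> x = - (B \<alpha> x *\<^sub>R \<alpha>) + (1/2) *\<^sub>R x"

definition comm :: "real^'n^'n \<Rightarrow> real^'n^'n \<Rightarrow> real^'n^'n" where
  "comm M N = M ** N - N ** M"

text \<open>Tensor (Kronecker) product of operators, acting on real^('a \<times> 'b) = real^'a \<otimes> real^'b.\<close>
definition tensor_op :: "real^'a^'a \<Rightarrow> real^'b^'b \<Rightarrow> real^('a \<times> 'b)^('a \<times> 'b)" where
  "tensor_op M N = (\<chi> p q. (M $ fst p $ fst q) * (N $ snd p $ snd q))"

text \<open>k is presented by generators X_i and relations; a family Y of operators
  is the image of the generators under a (unique) representation of k iff it
  satisfies the defining relations.\<close>

definition k_relations :: "('i \<Rightarrow> 'i \<Rightarrow> real) \<Rightarrow> ('i \<Rightarrow> real^'n^'n) \<Rightarrow> bool" where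
  "k_relations A Y \<longleftrightarrow>
     (\<forall>i j. i \<noteq> j \<longrightarrow> A i j = -1 \<longrightarrow> comm (Y i) (comm (Y i) (Y j)) = - Y j) \<and>
     (\<forall>i j. i \<noteq> j \<longrightarrow> A i j = 0 \<longrightarrow> comm (Y i) (Y j) = 0)"

text \<open>Generalized spin representation, given by its values R i = rho(X_i).\<close>
definition generalized_spin_rep :: "('i \<Rightarrow> 'i \<Rightarrow> real) \<Rightarrow> ('i \<Rightarrow> real^'n^'n) \<Rightarrow> bool" where
  "generalized_spin_rep A R \<longleftrightarrow> k_relations A R \<and> (\<forall>i. R i ** R i = - (1/4) *\<^sub>R mat 1)"

end

theory Submission imports Defs begin

text \<open>Expanding \<open>X(a)X(b)x = (a|b)(b|x)a - (a|x)a/2 - (b|x)b/2 + x/4\<close> gives the commutation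
  relations for arbitrary vectors \<open>a, b\<close> with the stated value of \<open>(a|b)\<close>. For the representation put \<open>Y\<^sub>i = M\<^sub>i \<otimes> G\<^sub>i\<close> with \<open>M\<^sub>i = X(\<alpha>\<^sub>i)\<close> and
  \<open>G\<^sub>i = 2\<rho>(X\<^sub>i)\<close>. The spin relations give \<open>G\<^sub>i\<^sup>2 = -1\<close> and, if \<open>a\<^sub>i\<^sub>j = -1\<close>,
  \<open>G\<^sub>i G\<^sub>j G\<^sub>i = G\<^sub>j\<close>, so that \<open>[Y\<^sub>i,[Y\<^sub>i,Y\<^sub>j]] = -{M\<^sub>i,{M\<^sub>i,M\<^sub>j}} \<otimes> G\<^sub>j\<close>; and
  \<open>{M\<^sub>i,{M\<^sub>i,M\<^sub>j}} = {X(\<alpha>\<^sub>i), X(\<alpha>\<^sub>i+\<alpha>\<^sub>j)} = X(-\<alpha>\<^sub>j) = M\<^sub>j\<close> because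
  \<open>(\<alpha>\<^sub>i|\<alpha>\<^sub>i+\<alpha>\<^sub>j) = 1\<close>.\<close>

lemma matrix_mul_add_rdistrib: "((A::'a::semiring_1^'n^'m) + B) ** C = A ** C + B ** C"
  by (simp add: vec_eq_iff matrix_matrix_mult_def sum.distrib algebra_simps)

lemma matrix_mul_diff_ldistrib: "(A::'a::ring_1^'n^'m) ** (B - C) = A ** B - A ** C"
  by (simp add: vec_eq_iff matrix_matrix_mult_def sum_subtractf algebra_simps)

lemma matrix_mul_diff_rdistrib: "((A::'a::ring_1^'n^'m) - B) ** C = A ** C - B ** C"
  by (simp add: vec_eq_iff matrix_matrix_mult_def sum_subtractf algebra_simps)

lemma matrix_mul_uminus_left: "(- (A::'a::ring_1^'n^'m)) ** B = - (A ** B)"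
  by (simp add: vec_eq_iff matrix_matrix_mult_def sum_negf)

lemma matrix_mul_uminus_right: "(A::'a::ring_1^'n^'m) ** (- B) = - (A ** B)"
  by (simp add: vec_eq_iff matrix_matrix_mult_def sum_negf)

lemma Xop_linear:
  assumes "bilinear B"
  shows "linear (Xop B a)"
proof -
  have "linear (B a)" using assms by (simp add: bilinear_def)
  then show ?thesis
    unfolding Xop_def by (intro linearI) (simp_all add: linear_add linear_scale algebra_simps)
qed

lemma Xop_uminus:
  assumes "bilinear B"
  shows "Xop B (- a) = Xop B a"
proof -
  have "linear (\<lambda>a. B a x)" for x
    using assms by (simp add: bilinear_def)
  then have "B (- a) x = - B a x" for x
    by (rule linear_neg)
  then show ?thesis by (simp add: fun_eq_iff Xop_def)
qed

lemma Xop_Xop: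
  assumes "bilinear B"
  shows "Xop B a (Xop B b x)
    = (B a b * B b x) *\<^sub>R a - (B a x / 2) *\<^sub>R a - (B b x / 2) *\<^sub>R b + (1/4) *\<^sub>R x"
proof -
  have "linear (B a)" using assms by (simp add: bilinear_def)
  then show ?thesis
    unfolding Xop_def by (simp add: linear_diff linear_scale algebra_simps)
qed

lemma Xop_commute:
  assumes "bilinear B" and "\<And>x y. B x y = B y x" and "B a b = 0"
  shows "Xop B a (Xop B b x) = Xop B b (Xop B a x)"
  using assms(3) assms(2)[of b a] by (simp add: Xop_Xop[OF assms(1)])

lemma Xop_anticommute_add:
  assumes "bilinear B" and "\<And>x y. B x y = B y x" and "B a b = -1"
  shows "Xop B a (Xop B b x) + Xop B b (Xop B a x) = Xop B (a + b) x"
proof -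
  have "linear (\<lambda>a. B a x)"
    using assms(1) by (simp add: bilinear_def)
  then have "B (a + b) x = B a x + B b x"
    by (rule linear_add)
  then show ?thesis
    using assms(3) assms(2)[of b a]
    by (simp add: Xop_Xop[OF assms(1)] Xop_def[of B "a + b"] algebra_simps)
      (simp add: vec_eq_iff)
qed

lemma Xop_anticommute_diff:
  assumes "bilinear B" and "\<And>x y. B x y = B y x" and "B a b = 1"
  shows "Xop B a (Xop B b x) + Xop B b (Xop B a x) = Xop B (a - b) x"
proof -
  have "linear (B a)"
    using assms(1) by (simp add: bilinear_def)
  then have "B a (- b) = -1"
    using assms(3) by (simp add: linear_neg)
  from Xop_anticommute_add[OF assms(1,2) this] show ?thesis
    by (simp add: Xop_uminus[OF assms(1)])
qed

definition anticomm :: "real^'n^'n \<Rightarrow> real^'n^'n \<Rightarrow> real^'n^'n" where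
  "anticomm M N = M ** N + N ** M"

lemma matrix_Xop_apply:
  assumes "bilinear B"
  shows "matrix (Xop B a) *v x = Xop B a x"
  using Xop_linear[OF assms] by (simp add: matrix_works linear_matrix_vector_mul_eq[symmetric])

lemma comm_matrix_Xop_eq_0:
  assumes "bilinear B" and "\<And>x y. B x y = B y x" and "B a b = 0"
  shows "comm (matrix (Xop B a)) (matrix (Xop B b)) = 0"
  using Xop_commute[OF assms]
  by (simp add: comm_def matrix_eq matrix_vector_mult_diff_rdistrib
      flip: matrix_vector_mul_assoc add: matrix_Xop_apply[OF assms(1)])

lemma anticomm_matrix_Xop_add:
  assumes "bilinear B" and "\<And>x y. B x y = B y x" and "B a b = -1"
  shows "anticomm (matrix (Xop B a)) (matrix (Xop B b)) = matrix (Xop B (a + b))"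
  using Xop_anticommute_add[OF assms]
  by (simp add: anticomm_def matrix_eq matrix_vector_mult_add_rdistrib
      flip: matrix_vector_mul_assoc add: matrix_Xop_apply[OF assms(1)])

lemma anticomm_matrix_Xop_diff:
  assumes "bilinear B" and "\<And>x y. B x y = B y x" and "B a b = 1"
  shows "anticomm (matrix (Xop B a)) (matrix (Xop B b)) = matrix (Xop B (a - b))"
  using Xop_anticommute_diff[OF assms]
  by (simp add: anticomm_def matrix_eq matrix_vector_mult_add_rdistrib
      flip: matrix_vector_mul_assoc add: matrix_Xop_apply[OF assms(1)])

lemma anticomm_anticomm_matrix_Xop:
  assumes "bilinear B" and "\<And>x y. B x y = B y x" and "B a a = 2" and "B a b = -1"
  shows "anticomm (matrix (Xop B a)) (anticomm (matrix (Xop B a)) (matrix (Xop B b)))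
    = matrix (Xop B b)"
proof -
  have "linear (B a)"
    using assms(1) by (simp add: bilinear_def)
  then have "B a (a + b) = 1"
    using assms(3,4) by (simp add: linear_add)
  then show ?thesis
    using assms
    by (simp add: anticomm_matrix_Xop_add anticomm_matrix_Xop_diff Xop_uminus)
qed

lemma tensor_op_mult: "tensor_op M N ** tensor_op P Q = tensor_op (M ** P) (N ** Q)"
proof -
  have "(\<Sum>r\<in>UNIV. M $ fst p $ fst r * N $ snd p $ snd r * (P $ fst r $ fst q * Q $ snd r $ snd q))
     = (\<Sum>a\<in>UNIV. M $ fst p $ a * P $ a $ fst q) * (\<Sum>b\<in>UNIV. N $ snd p $ b * Q $ b $ snd q)"
    for p q
    by (simp add: sum_product sum.cartesian_product flip: UNIV_Times_UNIV del: UNIV_Times_UNIV)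
      (rule sum.cong, auto simp: algebra_simps)
  then show ?thesis
    by (simp add: tensor_op_def matrix_matrix_mult_def vec_eq_iff)
qed

lemma comm_tensor_op_eq_0:
  assumes "comm M P = 0" and "comm N Q = 0"
  shows "comm (tensor_op M N) (tensor_op P Q) = 0"
  using assms by (simp add: comm_def tensor_op_mult)

lemma comm_comm_tensor_op:
  assumes NN: "N ** N = - mat 1" and NQN: "N ** (Q ** N) = Q"
  shows "comm (tensor_op M N) (comm (tensor_op M N) (tensor_op P Q))
    = - tensor_op (anticomm M (anticomm M P)) Q"
proof -
  have "N ** (N ** Q) = - Q"
    using NN by (simp add: matrix_mul_assoc matrix_mul_uminus_left)
  moreover have "(Q ** N) ** N = - Q"
    using NN by (simp add: matrix_mul_uminus_right flip: matrix_mul_assoc)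
  moreover have "(N ** Q) ** N = Q"
    using NQN by (simp flip: matrix_mul_assoc)
  ultimately have "comm (tensor_op M N) (comm (tensor_op M N) (tensor_op P Q))
    = tensor_op (M ** (M ** P)) (- Q) - tensor_op (M ** (P ** M)) Q
      - (tensor_op ((M ** P) ** M) Q - tensor_op ((P ** M) ** M) (- Q))"
    using NQN
    by (simp add: comm_def matrix_mul_diff_ldistrib matrix_mul_diff_rdistrib tensor_op_mult)
  also have "\<dots> = - tensor_op (anticomm M (anticomm M P)) Q"
    by (simp add: anticomm_def matrix_add_ldistrib matrix_mul_add_rdistrib matrix_mul_assoc
        tensor_op_def vec_eq_iff algebra_simps)
  finally show ?thesis .
qed

lemma spin_sandwich:
  fixes R S :: "real^'n^'n"
  assumes RR: "R ** R = - (1/4) *\<^sub>R mat 1" and "comm R (comm R S) = - S"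
  shows "R ** (S ** R) = (1/4) *\<^sub>R S"
proof -
  have "R ** (R ** S) = - (1/4) *\<^sub>R S"
    using RR by (simp add: matrix_mul_assoc matrix_mul_uminus_left flip: scalar_matrix_assoc)
  moreover have "(S ** R) ** R = - (1/4) *\<^sub>R S"
    using RR by (simp add: matrix_scalar_ac matrix_mul_uminus_right flip: matrix_mul_assoc)
  ultimately have eq: "- S = - (1/4) *\<^sub>R S - R ** (S ** R) - (R ** (S ** R) + (1/4) *\<^sub>R S)"
    using assms(2) by (simp add: comm_def matrix_mul_diff_ldistrib matrix_mul_diff_rdistrib
        matrix_mul_assoc)
  have "(R ** (S ** R)) $ i $ j = S $ i $ j / 4" for i j
    using arg_cong[OF eq, of "\<lambda>M. M $ i $ j"] by simp
  then show ?thesis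
    by (simp add: vec_eq_iff)
qed

lemma comm_scaleR: "comm (c *\<^sub>R M) (d *\<^sub>R N) = (c * d) *\<^sub>R comm M N"
  by (simp add: comm_def matrix_scalar_ac algebra_simps flip: scalar_matrix_assoc)

lemma double_spin_square:
  fixes R :: "real^'n^'n"
  assumes "R ** R = - (1/4) *\<^sub>R mat 1"
  shows "(2 *\<^sub>R R) ** (2 *\<^sub>R R) = - mat 1"
  using assms by (simp add: matrix_scalar_ac flip: scalar_matrix_assoc)

lemma double_spin_sandwich:
  fixes R S :: "real^'n^'n"
  assumes "R ** R = - (1/4) *\<^sub>R mat 1" and "comm R (comm R S) = - S"
  shows "(2 *\<^sub>R R) ** ((2 *\<^sub>R S) ** (2 *\<^sub>R R)) = 2 *\<^sub>R S"
  using spin_sandwich[OF assms] by (simp add: matrix_scalar_ac flip: scalar_matrix_assoc)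

theorem proposition5p3:
  fixes A :: "'i::finite \<Rightarrow> 'i \<Rightarrow> real"
    and \<alpha> :: "'i \<Rightarrow> real^'h::finite"
    and B :: "real^'h \<Rightarrow> real^'h \<Rightarrow> real"
    and \<rho> :: "'i \<Rightarrow> real^'s::finite^'s"
  assumes "simply_laced_gcm A"
    and "realization_form A \<alpha> B"
    and "generalized_spin_rep A \<rho>"
    and "\<forall>i. transpose (\<rho> i) = - \<rho> i"
  shows "(\<forall>a\<in>real_roots \<alpha> B. \<forall>b\<in>real_roots \<alpha> B.
            (B a b = 0 \<longrightarrow> (\<lambda>x. Xop B a (Xop B b x) - Xop B b (Xop B a x)) = (\<lambda>x. 0)) \<and>
            (B a b = -1 \<longrightarrow> (\<lambda>x. Xop B a (Xop B b x) + Xop B b (Xop B a x)) = Xop B (a + b)) \<and>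
            (B a b = 1 \<longrightarrow> (\<lambda>x. Xop B a (Xop B b x) + Xop B b (Xop B a x)) = Xop B (a - b)))
         \<and> k_relations A (\<lambda>i. tensor_op (matrix (Xop B (\<alpha> i))) (2 *\<^sub>R \<rho> i))"
proof -
  have bil: "bilinear B" and sym: "\<And>x y. B x y = B y x" and BA: "\<And>i j. B (\<alpha> i) (\<alpha> j) = A i j"
    using assms(2) unfolding realization_form_def by auto
  have Aii: "A i i = 2" for i
    using assms(1) unfolding simply_laced_gcm_def by auto
  have \<rho>_rel: "k_relations A \<rho>" and \<rho>_sq: "\<And>i. \<rho> i ** \<rho> i = - (1/4) *\<^sub>R mat 1"
    using assms(3) unfolding generalized_spin_rep_def by auto
  define Y where "Y = (\<lambda>i. tensor_op (matrix (Xop B (\<alpha> i))) (2 *\<^sub>R \<rho> i))"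
  have "k_relations A Y"
    unfolding k_relations_def
  proof (intro conjI allI impI)
    fix i j assume "i \<noteq> j" and "A i j = -1"
    then show "comm (Y i) (comm (Y i) (Y j)) = - Y j"
      using \<rho>_rel \<rho>_sq BA Aii
      by (simp add: Y_def k_relations_def comm_comm_tensor_op double_spin_square
          double_spin_sandwich anticomm_anticomm_matrix_Xop[OF bil sym])
  next
    fix i j assume "i \<noteq> j" and "A i j = 0"
    then show "comm (Y i) (Y j) = 0"
      using \<rho>_rel BA
      by (simp add: Y_def k_relations_def comm_tensor_op_eq_0 comm_scaleR
          comm_matrix_Xop_eq_0[OF bil sym])
  qed
  then show ?thesis
    unfolding Y_def using Xop_commute[OF bil sym] Xop_anticommute_add[OF bil sym] Xop_anticommute_diff[OF bil sym]
    by (auto simp: fun_eq_iff)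
qed

end
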